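(* Let $T>0$, $w\in W$ and $\alpha\in\Delta$ with $\ell(ws_\alpha)=\ell(w)+1$. (1) If $\pi$ is a low path of type $w$, then $c:=1/\int_0^Te^{-\alpha(\pi(s))}ds>0$ and $\eta=e^{-\infty}_\alpha\pi$ is a low path of type $ws_\alpha$. (2) Conversely, given a low path $\eta$ of type $ws_\alpha$ and $c>0$, there is a unique low path $\pi$ of type $w$ such that $c=1/\int_0^Te^{-\alpha(\pi)}$ and $\eta=e^{-\infty}_\alpha\pi$; it is given by $\pi(t)=\eta(t)+\log\big(1+c\int_0^te^{-\alpha(\eta(s))}ds\big)\alpha^\vee$ for $0\le t<T$.
   Context: $\mathfrak a$ is the real Cartan subalgebra of a complex semisimple Lie algebra, $\Delta$ the simple roots, $\alpha^\vee$ coroots, $W$ the Weyl group with simple reflections $s_\alpha$ and length $\ell$. $\rho^\vee=\sum_{\alpha\in\Delta}\omega^\vee_\alpha$, $(\omega^\vee_\alpha)$ the basis of $\mathfrak a$ dual to the simple roots. Constants $c_w\in\mathfrak a$: $c_e=0$ and whenever $w=us_\alpha$ with $\ell(w)=\ell(u)+1$, $c_w=s_\alpha c_u-\log((u\alpha)(\rho^\vee))\alpha^\vee$ (independent of the decomposition). A low path of type $w$ is a continuous $\pi:[0,T)\to\mathfrak a$ with $\pi(0)=0$ such that for some $C_\pi\in\mathfrak a$, $\pi(t)=C_\pi+\log(T-t)(\rho^\vee-w^{-1}\rho^\vee)+c_w+o(1)$ as $t\to T$. For such $\pi$, $e^{-\infty}_\alpha\pi(t)=\pi(t)+\log\Big(1-\frac{\int_0^te^{-\alpha(\pi(s))}ds}{\int_0^Te^{-\alpha(\pi(s))}ds}\Big)\alpha^\vee$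 for $0\le t<T$. *)

theory Defs
  imports "HOL-Analysis.Analysis"
begin

text \<open>The real Cartan subalgebra is modelled as a Euclidean space 'a, carrying a
  W-invariant inner product; a root beta is identified with the functional
  x |-> beta \<bullet> x.  The set of simple roots of a complex semisimple Lie algebra
  is, up to this identification, a basis of 'a consisting of pairwise
  non-acute vectors with integral Cartan numbers (a base of a reduced
  crystallographic root system).\<close>

definition simple_system :: "'a::euclidean_space set \<Rightarrow> bool" where
  "simple_system D \<longleftrightarrow> finite D \<and> independent D \<and> span D = UNIV \<and>
     (\<forall>a\<in>D. \<forall>b\<in>D. a \<noteq> b \<longrightarrow> a \<bullet> b \<le> 0) \<and>
     (\<forall>a\<in>D. \<forall>b\<in>D. 2 * (b \<bullet> a) / (a \<bullet> a) \<in> \<int>)"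

definition coroot :: "'a::euclidean_space \<Rightarrow> 'a" where
  "coroot a = (2 / (a \<bullet> a)) *\<^sub>R a"

definition refl :: "'a::euclidean_space \<Rightarrow> 'a \<Rightarrow> 'a" where
  "refl a x = x - (a \<bullet> x) *\<^sub>R coroot a"

fun wordmap :: "'a::euclidean_space list \<Rightarrow> 'a \<Rightarrow> 'a" where
  "wordmap [] = id"
| "wordmap (a # as) = refl a \<circ> wordmap as"

definition weyl :: "'a::euclidean_space set \<Rightarrow> ('a \<Rightarrow> 'a) set" where
  "weyl D = {wordmap as | as. set as \<subseteq> D}"

definition wlen :: "'a::euclidean_space set \<Rightarrow> ('a \<Rightarrow> 'a) \<Rightarrow> nat" where
  "wlen D w = (LEAST n. \<exists>as. set as \<subseteq> D \<and> length as = n \<and> wordmap as = w)"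

definition reduced_word :: "'a::euclidean_space set \<Rightarrow> ('a \<Rightarrow> 'a) \<Rightarrow> 'a list \<Rightarrow> bool" where
  "reduced_word D w as \<longleftrightarrow> set as \<subseteq> D \<and> wordmap as = w \<and> length as = wlen D w"

definition coweight :: "'a::euclidean_space set \<Rightarrow> 'a \<Rightarrow> 'a" where
  "coweight D a = (THE v. \<forall>b\<in>D. b \<bullet> v = (if b = a then 1 else 0))"

definition rho_vee :: "'a::euclidean_space set \<Rightarrow> 'a" where
  "rho_vee D = (\<Sum>a\<in>D. coweight D a)"

text \<open>The constant c_w computed along a word given in reversed order:
  for w = u s_a (word of u followed by a), c_w = s_a c_u - log((u a)(rho^vee)) a^vee.\<close>
fun crev :: "'a::euclidean_space set \<Rightarrow> 'a list \<Rightarrow> 'a" where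
  "crev D [] = 0"
| "crev D (a # bs) = refl a (crev D bs) - ln (wordmap (rev bs) a \<bullet> rho_vee D) *\<^sub>R coroot a"

text \<open>c_w via a reduced word (the paper asserts independence of the choice).\<close>
definition cconst :: "'a::euclidean_space set \<Rightarrow> ('a \<Rightarrow> 'a) \<Rightarrow> 'a" where
  "cconst D w = crev D (rev (SOME as. reduced_word D w as))"

definition low_path :: "'a::euclidean_space set \<Rightarrow> real \<Rightarrow> ('a \<Rightarrow> 'a) \<Rightarrow> (real \<Rightarrow> 'a) \<Rightarrow> bool" where
  "low_path D T w p \<longleftrightarrow> continuous_on {0..<T} p \<and> p 0 = 0 \<and>
     (\<exists>C. ((\<lambda>t. p t - (C + ln (T - t) *\<^sub>R (rho_vee D - inv w (rho_vee D)) + cconst D w))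
            \<longlongrightarrow> 0) (at_left T))"

definition eminf :: "'a::euclidean_space \<Rightarrow> real \<Rightarrow> (real \<Rightarrow> 'a) \<Rightarrow> real \<Rightarrow> 'a" where
  "eminf a T p t = p t + ln (1 - integral {0..t} (\<lambda>s. exp (- (a \<bullet> p s)))
                                / integral {0..T} (\<lambda>s. exp (- (a \<bullet> p s)))) *\<^sub>R coroot a"

end

theory Submission
  imports Defs
begin

text \<open>Put \<open>k = \<alpha>(w\<^sup>-\<^sup>1 \<rho>\<^sup>\<or>)\<close>. Since \<open>(w s\<^sub>\<alpha>)\<^sup>-\<^sup>1 \<rho>\<^sup>\<or> = s\<^sub>\<alpha> (w\<^sup>-\<^sup>1 \<rho>\<^sup>\<or>)\<close>, the logarithmic
  directions \<open>\<rho>\<^sup>\<or> - w\<^sup>-\<^sup>1 \<rho>\<^sup>\<or>\<close> of low paths of the two types differ by \<open>k \<alpha>\<^sup>\<or>\<close>. Moreover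
  \<open>k = (w \<alpha>)(\<rho>\<^sup>\<or>) > 0\<close>, because \<open>w \<alpha>\<close> is a positive root when \<open>\<ell>(w s\<^sub>\<alpha>) > \<ell>(w)\<close>; as usual
  this reduces to the dihedral subsystems, which are of type \<open>A\<^sub>1 \<times> A\<^sub>1\<close>, \<open>A\<^sub>2\<close>, \<open>B\<^sub>2\<close> or \<open>G\<^sub>2\<close>.

  For a low path \<open>\<pi>\<close> of type \<open>w\<close>, \<open>exp (-\<alpha>(\<pi> s))\<close> behaves like \<open>(T - s)\<^sup>k\<^sup>-\<^sup>1\<close>, so it is
  integrable and its tail integral behaves like \<open>(T - t)\<^sup>k\<close>: this is exactly the shift by
  \<open>k \<alpha>\<^sup>\<or>\<close>. Conversely \<open>exp (-\<alpha>(\<eta> s))\<close> behaves like \<open>(T - s)\<^sup>-\<^sup>k\<^sup>-\<^sup>1\<close>. With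
  \<open>u t = 1 + c \<integral>\<^sub>0\<^sup>t exp (-\<alpha>(\<eta> s)) ds\<close>, the candidate \<open>\<pi> = \<eta> + log u \<alpha>\<^sup>\<or>\<close> satisfies
  \<open>exp (-\<alpha>(\<pi>)) = exp (-\<alpha>(\<eta>)) / u\<^sup>2\<close>, whose primitive is \<open>(1 - 1/u) / c\<close>. This gives the total
  integral \<open>1/c\<close> and \<open>\<eta> = e\<^sub>\<alpha>\<^sup>-\<^sup>\<infinity> \<pi>\<close>; read backwards, it gives uniqueness.\<close>

section \<open>Reflections and the length function\<close>

lemma refl_add: "refl a (x + y) = refl a x + refl a y"
  by (simp add: refl_def inner_add_right algebra_simps)

lemma refl_scaleR: "refl a (c *\<^sub>R x) = c *\<^sub>R refl a x"
  by (simp add: refl_def algebra_simps)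

lemma linear_refl: "linear (refl a)"
  by (rule linearI) (simp_all add: refl_add refl_scaleR)

lemma inner_coroot_self: "a \<noteq> 0 \<Longrightarrow> a \<bullet> coroot a = 2"
  by (simp add: coroot_def)

lemma refl_refl [simp]: "refl a (refl a x) = x"
  by (cases "a = 0") (simp_all add: refl_def coroot_def inner_diff_right algebra_simps)

lemma comp_refl_refl [simp]: "f \<circ> refl a \<circ> refl a = f"
  by (simp add: fun_eq_iff)

lemma inner_refl_refl: "refl a x \<bullet> refl a y = x \<bullet> y"
  by (cases "a = 0")
    (simp_all add: refl_def coroot_def inner_diff_left inner_diff_right inner_commute algebra_simps)

lemma inv_refl: "inv (refl a) = refl a"
  by (rule inv_equality) simp_all

lemma wordmap_append: "wordmap (xs @ ys) = wordmap xs \<circ> wordmap ys"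
  by (induction xs) auto

lemma wordmap_snoc_refl: "wordmap (xs @ [a]) \<circ> refl a = wordmap xs"
  by (simp add: wordmap_append)

lemma linear_wordmap: "linear (wordmap xs)"
proof (induction xs)
  case (Cons a xs)
  then show ?case using linear_compose[OF Cons.IH linear_refl] by (simp add: comp_def)
qed (simp add: linear_id[unfolded id_def])

lemma inner_wordmap: "wordmap xs x \<bullet> wordmap xs y = x \<bullet> y"
  by (induction xs) (auto simp: inner_refl_refl)

lemma wordmap_rev_wordmap: "wordmap (rev xs) (wordmap xs x) = x"
  by (induction xs arbitrary: x) (auto simp: wordmap_append)

lemma wordmap_wordmap_rev: "wordmap xs (wordmap (rev xs) x) = x"
  using wordmap_rev_wordmap[of "rev xs"] by simp

lemma bij_wordmap: "bij (wordmap xs)"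
  by (rule bij_betw_byWitness[where f'="wordmap (rev xs)"])
    (auto simp: wordmap_wordmap_rev wordmap_rev_wordmap)

lemma inv_wordmap: "inv (wordmap xs) = wordmap (rev xs)"
  by (rule inv_equality) (auto simp: wordmap_wordmap_rev wordmap_rev_wordmap)

lemma weyl_wordmap: "set as \<subseteq> D \<Longrightarrow> wordmap as \<in> weyl D"
  unfolding weyl_def by blast

lemma refl_in_weyl: "s \<in> D \<Longrightarrow> refl s \<in> weyl D"
  using weyl_wordmap[of "[s]" D] by simp

lemma weyl_comp: "v \<in> weyl D \<Longrightarrow> y \<in> weyl I \<Longrightarrow> I \<subseteq> D \<Longrightarrow> v \<circ> y \<in> weyl D"
proof -
  assume "v \<in> weyl D" "y \<in> weyl I" "I \<subseteq> D"
  then obtain as bs where "set as \<subseteq> D" "wordmap as = v" "set bs \<subseteq> I" "wordmap bs = y"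
    unfolding weyl_def by blast
  then show ?thesis
    using weyl_wordmap[of "as @ bs" D] \<open>I \<subseteq> D\<close> by (auto simp: wordmap_append)
qed

lemma weyl_comp_refl: "v \<in> weyl D \<Longrightarrow> s \<in> D \<Longrightarrow> v \<circ> refl s \<in> weyl D"
  using weyl_comp[OF _ refl_in_weyl] by blast

lemma linear_weyl: "w \<in> weyl D \<Longrightarrow> linear w"
  unfolding weyl_def using linear_wordmap by blast

lemma simple_system_nonzero: "simple_system D \<Longrightarrow> 0 \<notin> D"
  unfolding simple_system_def using dependent_zero by blast

lemma wlen_word_exists:
  "w \<in> weyl D \<Longrightarrow> \<exists>as. set as \<subseteq> D \<and> length as = wlen D w \<and> wordmap as = w"
  unfolding weyl_def wlen_def by (rule LeastI_ex) blast

lemma wlen_wordmap_le: "set as \<subseteq> D \<Longrightarrow> wlen D (wordmap as) \<le> length as"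
  unfolding wlen_def by (rule Least_le) blast

lemma wlen_refl_le: "s \<in> D \<Longrightarrow> wlen D (refl s) \<le> 1"
  using wlen_wordmap_le[of "[s]" D] by simp

lemma wlen_comp_le: "v \<in> weyl D \<Longrightarrow> y \<in> weyl I \<Longrightarrow> I \<subseteq> D \<Longrightarrow>
  wlen D (v \<circ> y) \<le> wlen D v + wlen I y"
proof -
  assume "v \<in> weyl D" "y \<in> weyl I" "I \<subseteq> D"
  then obtain as bs where "set as \<subseteq> D" "length as = wlen D v" "wordmap as = v"
    "set bs \<subseteq> I" "length bs = wlen I y" "wordmap bs = y"
    using wlen_word_exists by metis
  then show ?thesis using wlen_wordmap_le[of "as @ bs" D] \<open>I \<subseteq> D\<close> by (auto simp: wordmap_append)
qed

section \<open>Dihedral subsystems\<close>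

text \<open>The coefficients of \<open>s\<close> and \<open>t\<close> in \<open>wordmap u x - x\<close>, computed from the Cartan
  integers \<open>A, B\<close> of \<open>s, t\<close> and the coordinates \<open>P, Q\<close> of \<open>x\<close>; see below.\<close>

fun rank2_coords :: "'a \<Rightarrow> real \<Rightarrow> real \<Rightarrow> real \<Rightarrow> real \<Rightarrow> 'a list \<Rightarrow> real \<times> real" where
  "rank2_coords s A B P Q [] = (0, 0)"
| "rank2_coords s A B P Q (c # u) = (let (f, g) = rank2_coords s A B P Q u in
     if c = s then (- f - P - A * g, g) else (f, - g - Q - B * f))"

lemma wordmap_rank2_coords:
  fixes s t x :: "'a::euclidean_space"
  assumes "s \<noteq> 0" "t \<noteq> 0" "set u \<subseteq> {s, t}"
  defines "A \<equiv> 2 * (s \<bullet> t) / (s \<bullet> s)" and "B \<equiv> 2 * (s \<bullet> t) / (t \<bullet> t)"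
  defines "P \<equiv> 2 * (s \<bullet> x) / (s \<bullet> s)" and "Q \<equiv> 2 * (t \<bullet> x) / (t \<bullet> t)"
  shows "wordmap u x = x + fst (rank2_coords s A B P Q u) *\<^sub>R s + snd (rank2_coords s A B P Q u) *\<^sub>R t"
  using assms(3)
proof (induction u)
  case (Cons c u)
  obtain f g where fg: "rank2_coords s A B P Q u = (f, g)" by force
  have IH: "wordmap u x = x + f *\<^sub>R s + g *\<^sub>R t"
    using Cons fg by simp
  have ss: "s \<bullet> s \<noteq> 0" "t \<bullet> t \<noteq> 0" using assms(1,2) by auto
  show ?case
  proof (cases "c = s")
    case True
    have "(s \<bullet> (x + f *\<^sub>R s + g *\<^sub>R t)) * (2 / (s \<bullet> s)) = P + 2 * f + A * g"
      using ss(1) by (simp add: P_def A_def inner_add_right field_simps)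
    then have "wordmap (c # u) x = x + (- f - P - A * g) *\<^sub>R s + g *\<^sub>R t"
      using True IH by (simp add: refl_def coroot_def algebra_simps) (metis mult_2_right scaleR_add_left)
    then show ?thesis using True fg by simp
  next
    case False
    then have ct: "c = t" using Cons.prems by auto
    have "(t \<bullet> (x + f *\<^sub>R s + g *\<^sub>R t)) * (2 / (t \<bullet> t)) = Q + B * f + 2 * g"
      using ss(2) by (simp add: B_def Q_def inner_add_right inner_commute[of t s] field_simps)
    then have "wordmap (c # u) x = x + f *\<^sub>R s + (- g - Q - B * f) *\<^sub>R t"
      using ct IH by (simp add: refl_def coroot_def algebra_simps) (metis mult_2_right scaleR_add_left)
    then show ?thesis using False fg by simp
  qed
qed simp

fun alternating_word :: "'a \<Rightarrow> 'a \<Rightarrow> nat \<Rightarrow> 'a list" where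
  "alternating_word s t 0 = []"
| "alternating_word s t (Suc k) = (if even k then t else s) # alternating_word s t k"

lemma length_alternating_word [simp]: "length (alternating_word s t k) = k"
  by (induction k) auto

lemma set_alternating_word: "set (alternating_word s t k) \<subseteq> {s, t}"
  by (induction k) auto

lemma alternating_word_Suc_snoc: "alternating_word s t (Suc k) = alternating_word t s k @ [t]"
  by (induction k arbitrary: s t) auto

lemma alternating_word_add: "\<exists>p. alternating_word s t (j + m) = p @ alternating_word s t m"
  by (induction j) (auto intro: exI[of _ "_ # _"])

lemma alternating_word_eqI:
  assumes "set u \<subseteq> {s, t}" "s \<noteq> t" "\<And>p c q. u \<noteq> p @ c # c # q" "u = [] \<or> last u = t"
  shows "u = alternating_word s t (length u)"
  using assms
proof (induction u)
  case (Cons c u)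
  show ?case
  proof (cases "u = []")
    case False
    have "u \<noteq> p @ c' # c' # q" for p c' q
      using Cons.prems(3)[of "c # p" c' q] by auto
    then have "u = alternating_word s t (length u)" using Cons.IH Cons.prems False by auto
    then obtain k where k: "length u = Suc k" "u = alternating_word s t (Suc k)" using False
      by (metis length_0_conv not0_implies_Suc)
    have "c \<noteq> hd u"
      using Cons.prems(3)[of "[]" c "tl u"] False by auto
    then have "c = (if even (Suc k) then t else s)" using k Cons.prems(1) by auto
    then show ?thesis using k by simp
  qed (use Cons.prems in simp)
qed simp

text \<open>\<open>m\<close> is the order of \<open>s t\<close>: the braid relation of length \<open>m\<close> holds, and the shorter
  alternating words send \<open>s\<close> to a nonnegative combination of \<open>s\<close> and \<open>t\<close>.\<close>

definition dihedral_order :: "'a \<Rightarrow> 'a \<Rightarrow> real \<Rightarrow> real \<Rightarrow> nat \<Rightarrow> bool" where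
  "dihedral_order s t A B m \<longleftrightarrow> m > 0 \<and>
     (\<forall>P Q. rank2_coords s A B P Q (alternating_word s t m) = rank2_coords s A B P Q (alternating_word t s m)) \<and>
     (\<forall>k<m. 0 \<le> 1 + fst (rank2_coords s A B 2 B (alternating_word s t k)) \<and>
            0 \<le> snd (rank2_coords s A B 2 B (alternating_word s t k)))"

text \<open>The types \<open>A\<^sub>1 \<times> A\<^sub>1\<close>, \<open>A\<^sub>2\<close>, \<open>B\<^sub>2\<close> and \<open>G\<^sub>2\<close>, of orders 2, 3, 4 and 6.\<close>

lemma dihedral_order_exists:
  assumes "s \<noteq> t" "(A, B) \<in> {(0, 0), (-1, -1), (-1, -2), (-2, -1), (-1, -3), (-3, -1)}"
  shows "\<exists>m. dihedral_order s t A B m"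
proof -
  have "dihedral_order s t A B (if A = 0 then 2 else if A * B = 1 then 3 else if A * B = 2 then 4 else 6)"
    using assms
    by (auto simp: dihedral_order_def eval_nat_numeral All_less_Suc alternating_word_Suc_snoc
        simp del: alternating_word.simps(2))
  then show ?thesis ..
qed

lemma cartan_integers_cases:
  fixes A B :: real
  assumes "A \<in> \<int>" "B \<in> \<int>" "A \<le> 0" "B \<le> 0" "A * B < 4" "A = 0 \<longleftrightarrow> B = 0"
  shows "(A, B) \<in> {(0, 0), (-1, -1), (-1, -2), (-2, -1), (-1, -3), (-3, -1)}"
proof -
  obtain a b :: int where ab: "A = of_int a" "B = of_int b"
    using assms(1,2) by (auto elim!: Ints_cases)
  have "a \<le> 0" "b \<le> 0" "a * b < 4" "a = 0 \<longleftrightarrow> b = 0"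
    using assms ab by (simp_all, metis of_int_less_iff of_int_mult of_int_numeral)
  moreover have "a \<ge> -3"
  proof (rule ccontr)
    assume "\<not> a \<ge> -3"
    then have "(-a) * (-b) \<ge> 4 * 1"
      using calculation by (intro mult_mono) auto
    then show False using calculation by simp
  qed
  moreover have "b \<ge> -3"
  proof (rule ccontr)
    assume "\<not> b \<ge> -3"
    then have "(-a) * (-b) \<ge> 1 * 4"
      using calculation by (intro mult_mono) auto
    then show False using calculation by simp
  qed
  ultimately have "a \<in> {-3, -2, -1, 0}" "b \<in> {-3, -2, -1, 0}" "a * b < 4" "a = 0 \<longleftrightarrow> b = 0"
    by auto
  then show ?thesis unfolding ab by auto
qed

lemma inner_square_less_of_independent:
  fixes s t :: "'a::euclidean_space"
  assumes "independent {s, t}" "s \<noteq> t" "t \<noteq> 0"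
  shows "(s \<bullet> t)\<^sup>2 < (s \<bullet> s) * (t \<bullet> t)"
proof (rule ccontr)
  assume not_less: "\<not> ?thesis"
  define v where "v = (t \<bullet> t) *\<^sub>R s - (s \<bullet> t) *\<^sub>R t"
  have "v \<bullet> v = (t \<bullet> t) * ((t \<bullet> t) * (s \<bullet> s) - (s \<bullet> t)\<^sup>2)"
    unfolding v_def
    by (simp add: inner_diff_left inner_diff_right inner_commute[of t s] power2_eq_square algebra_simps)
  also have "\<dots> \<le> 0"
    using not_less by (intro mult_nonneg_nonpos) (auto simp: algebra_simps)
  finally have "(t \<bullet> t) *\<^sub>R s = (s \<bullet> t) *\<^sub>R t"
    unfolding v_def by (metis eq_iff_diff_eq_0 inner_eq_zero_iff inner_ge_zero order_antisym)
  then have "s = ((s \<bullet> t) / (t \<bullet> t)) *\<^sub>R t"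
    using \<open>t \<noteq> 0\<close> by (metis (no_types, lifting) divideR_right inner_eq_zero_iff scaleR_scaleR divide_inverse_commute)
  then have "s \<in> span {t}" by (metis span_base span_scale singletonI)
  then show False using assms(1,2) by (simp add: independent_insert)
qed

lemma simple_system_cartan_pair:
  assumes D: "simple_system D" and "s \<in> D" "t \<in> D" "s \<noteq> t"
  shows "(2 * (s \<bullet> t) / (s \<bullet> s), 2 * (s \<bullet> t) / (t \<bullet> t))
    \<in> {(0, 0), (-1, -1), (-1, -2), (-2, -1), (-1, -3), (-3, -1)}"
proof (rule cartan_integers_cases)
  have "s \<noteq> 0" "t \<noteq> 0" using simple_system_nonzero[OF D] assms by auto
  then have ss: "s \<bullet> s > 0" "t \<bullet> t > 0" by auto
  have "\<forall>a\<in>D. \<forall>b\<in>D. 2 * (b \<bullet> a) / (a \<bullet> a) \<in> \<int>"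
    using D by (simp add: simple_system_def)
  then show "2 * (s \<bullet> t) / (s \<bullet> s) \<in> \<int>" "2 * (s \<bullet> t) / (t \<bullet> t) \<in> \<int>"
    using assms by (metis inner_commute)+
  have "s \<bullet> t \<le> 0" using D assms by (auto simp: simple_system_def)
  then show "2 * (s \<bullet> t) / (s \<bullet> s) \<le> 0" "2 * (s \<bullet> t) / (t \<bullet> t) \<le> 0"
    using ss by (auto simp: divide_nonpos_pos)
  show "2 * (s \<bullet> t) / (s \<bullet> s) = 0 \<longleftrightarrow> 2 * (s \<bullet> t) / (t \<bullet> t) = 0"
    using ss by auto
  have "independent {s, t}"
    using D assms unfolding simple_system_def by (meson independent_mono empty_subsetI insert_subset)
  then have "(s \<bullet> t)\<^sup>2 < (s \<bullet> s) * (t \<bullet> t)"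
    using inner_square_less_of_independent \<open>s \<noteq> t\<close> \<open>t \<noteq> 0\<close> by blast
  then show "2 * (s \<bullet> t) / (s \<bullet> s) * (2 * (s \<bullet> t) / (t \<bullet> t)) < 4"
    using ss by (simp add: power2_eq_square field_simps)
qed

context
  fixes s t :: "'a::euclidean_space" and m :: nat
  assumes s: "s \<noteq> 0" and t: "t \<noteq> 0"
    and m: "dihedral_order s t (2 * (s \<bullet> t) / (s \<bullet> s)) (2 * (s \<bullet> t) / (t \<bullet> t)) m"
begin

lemma dihedral_order_braid: "wordmap (alternating_word s t m) = wordmap (alternating_word t s m)"
proof
  fix x
  have "set (alternating_word t s m) \<subseteq> {s, t}"
    using set_alternating_word[of t s m] by auto
  then show "wordmap (alternating_word s t m) x = wordmap (alternating_word t s m) x"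
    using wordmap_rank2_coords[OF s t set_alternating_word[of s t m], of x]
      wordmap_rank2_coords[OF s t, of "alternating_word t s m" x] m
    by (simp add: dihedral_order_def)
qed

lemma dihedral_order_nonneg:
  assumes "k < m"
  shows "\<exists>\<alpha> \<beta>. 0 \<le> \<alpha> \<and> 0 \<le> \<beta> \<and> wordmap (alternating_word s t k) s = \<alpha> *\<^sub>R s + \<beta> *\<^sub>R t"
proof -
  let ?c = "rank2_coords s (2 * (s \<bullet> t) / (s \<bullet> s)) (2 * (s \<bullet> t) / (t \<bullet> t)) 2
              (2 * (s \<bullet> t) / (t \<bullet> t)) (alternating_word s t k)"
  have "wordmap (alternating_word s t k) s = (1 + fst ?c) *\<^sub>R s + snd ?c *\<^sub>R t"
    using wordmap_rank2_coords[OF s t set_alternating_word[of s t k], of s] s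
    by (simp add: inner_commute[of t s] algebra_simps)
  moreover have "0 \<le> 1 + fst ?c" "0 \<le> snd ?c"
    using m assms by (auto simp: dihedral_order_def)
  ultimately show ?thesis by blast
qed

lemma dihedral_order_shortens:
  assumes "m \<le> n"
  shows "wlen {s, t} (wordmap (alternating_word s t n) \<circ> refl s) < n"
proof -
  text \<open>The braid relation turns the alternating word into one ending in \<open>s\<close>.\<close>
  obtain j where j: "n = j + m" using assms by (metis add.commute le_add_diff_inverse)
  obtain p where p: "alternating_word s t (j + m) = p @ alternating_word s t m"
    using alternating_word_add[of s t j m] by blast
  obtain m' where m': "m = Suc m'" using m by (cases m) (auto simp: dihedral_order_def)
  then obtain q where q: "alternating_word t s m = q @ [s]"
    using alternating_word_Suc_snoc[of t s m'] by blast
  have "wordmap (alternating_word s t n) = wordmap (p @ q @ [s])"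
    using j p q dihedral_order_braid by (simp add: wordmap_append)
  then have "wordmap (alternating_word s t n) \<circ> refl s = wordmap (p @ q)"
    using wordmap_snoc_refl[of "p @ q" s] by simp
  moreover have "set (p @ q) \<subseteq> {s, t}"
    using set_alternating_word[of s t "j + m"] set_alternating_word[of t s m] p q by auto
  moreover have "length (p @ q) < n"
    using j m' arg_cong[OF p, of length] arg_cong[OF q, of length] by simp
  ultimately show ?thesis using wlen_wordmap_le[of "p @ q" "{s, t}"] by simp
qed

end

lemma reduced_rank2_word_alternating:
  assumes st: "s \<noteq> t" "s \<noteq> 0" "t \<noteq> 0" and u: "set u \<subseteq> {s, t}"
    and reduced: "length u = wlen {s, t} (wordmap u)"
    and len: "wlen {s, t} (wordmap u) \<le> wlen {s, t} (wordmap u \<circ> refl s)"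
  shows "u = alternating_word s t (length u)"
proof (rule alternating_word_eqI[OF u \<open>s \<noteq> t\<close>])
  fix p c q
  show "u \<noteq> p @ c # c # q"
  proof
    assume u_eq: "u = p @ c # c # q"
    then have "wordmap u = wordmap (p @ q)"
      by (simp add: wordmap_append fun_eq_iff)
    then show False
      using wlen_wordmap_le[of "p @ q" "{s, t}"] u u_eq reduced by auto
  qed
next
  show "u = [] \<or> last u = t"
  proof (rule ccontr)
    assume "\<not> ?thesis"
    then obtain q where q: "u = q @ [s]"
      using u last_in_set by (metis append_butlast_last_id insertE singletonD subsetD)
    then have "wlen {s, t} (wordmap u \<circ> refl s) \<le> length q"
      using wlen_wordmap_le[of q "{s, t}"] u by (simp add: wordmap_snoc_refl)
    then show False using len reduced q by simp
  qed
qed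

lemma rank2_nonneg_image:
  assumes D: "simple_system D" and "s \<in> D" "t \<in> D" "s \<noteq> t"
    and x: "x \<in> weyl {s, t}" and len: "wlen {s, t} x \<le> wlen {s, t} (x \<circ> refl s)"
  shows "\<exists>\<alpha> \<beta>. 0 \<le> \<alpha> \<and> 0 \<le> \<beta> \<and> x s = \<alpha> *\<^sub>R s + \<beta> *\<^sub>R t"
proof -
  have s: "s \<noteq> 0" and t: "t \<noteq> 0" using simple_system_nonzero[OF D] assms by auto
  obtain m where m: "dihedral_order s t (2 * (s \<bullet> t) / (s \<bullet> s)) (2 * (s \<bullet> t) / (t \<bullet> t)) m"
    using dihedral_order_exists[OF \<open>s \<noteq> t\<close> simple_system_cartan_pair[OF assms(1-4)]] by blast
  obtain u where u: "set u \<subseteq> {s, t}" "length u = wlen {s, t} x" "wordmap u = x"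
    using wlen_word_exists[OF x] by blast
  have u_alt: "u = alternating_word s t (length u)"
    using reduced_rank2_word_alternating[OF \<open>s \<noteq> t\<close> s t u(1)] u len by simp
  show ?thesis
  proof (cases "length u < m")
    case True
    then show ?thesis
      using dihedral_order_nonneg[OF s t m True] u(3) u_alt by simp
  next
    case False
    then have "wlen {s, t} (x \<circ> refl s) < wlen {s, t} x"
      using dihedral_order_shortens[OF s t m, of "length u"] u u_alt by simp
    then show ?thesis using len by simp
  qed
qed

section \<open>Positivity of \<open>w a\<close>\<close>

definition nonneg_comb :: "'a::euclidean_space set \<Rightarrow> 'a \<Rightarrow> bool" where
  "nonneg_comb D v \<longleftrightarrow> (\<exists>c. (\<forall>d\<in>D. 0 \<le> c d) \<and> v = (\<Sum>d\<in>D. c d *\<^sub>R d))"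

lemma nonneg_comb_add: "nonneg_comb D u \<Longrightarrow> nonneg_comb D v \<Longrightarrow> nonneg_comb D (u + v)"
  unfolding nonneg_comb_def
  by (elim exE conjE, rule exI[of _ "\<lambda>d. _ d + _ d"]) (auto simp: scaleR_add_left sum.distrib)

lemma nonneg_comb_scaleR: "0 \<le> \<alpha> \<Longrightarrow> nonneg_comb D u \<Longrightarrow> nonneg_comb D (\<alpha> *\<^sub>R u)"
  unfolding nonneg_comb_def
  by (elim exE conjE, rule exI[of _ "\<lambda>d. \<alpha> * _ d"]) (auto simp: scaleR_sum_right)

lemma nonneg_comb_base: "finite D \<Longrightarrow> s \<in> D \<Longrightarrow> nonneg_comb D s"
  unfolding nonneg_comb_def
proof (intro exI[of _ "\<lambda>d. if d = s then 1 else 0"] conjI)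
  assume "finite D" "s \<in> D"
  then show "s = (\<Sum>d\<in>D. (if d = s then 1 else 0) *\<^sub>R d)"
    by (simp add: if_distrib[of "\<lambda>c. c *\<^sub>R _"] sum.delta' cong: if_cong)
qed simp

text \<open>Factorisation of \<open>w\<close> through a minimal representative \<open>v\<close> of the coset \<open>w W\<^sub>I\<close>.\<close>

lemma weyl_min_coset_factor:
  assumes w: "w \<in> weyl D" and ID: "I \<subseteq> D"
  obtains v x where "v \<in> weyl D" "x \<in> weyl I" "w = v \<circ> x" "wlen D w = wlen D v + wlen I x"
    "\<And>r. r \<in> I \<Longrightarrow> wlen D v \<le> wlen D (v \<circ> refl r)"
    "\<And>r. r \<in> I \<Longrightarrow> wlen D (w \<circ> refl r) < wlen D w \<Longrightarrow> wlen D v < wlen D w"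
proof -
  define factor where "factor v \<longleftrightarrow>
    v \<in> weyl D \<and> (\<exists>x\<in>weyl I. w = v \<circ> x \<and> wlen D w = wlen D v + wlen I x)" for v
  have factor_refl: "factor (w \<circ> refl r)" if r: "r \<in> I" "wlen D (w \<circ> refl r) < wlen D w" for r
  proof -
    have wr: "w \<circ> refl r \<in> weyl D" using weyl_comp_refl[OF w] r ID by auto
    have "wlen D w \<le> wlen D (w \<circ> refl r) + wlen I (refl r)"
      using wlen_comp_le[OF wr refl_in_weyl[OF r(1)] ID] by simp
    then have "wlen D w = wlen D (w \<circ> refl r) + wlen I (refl r)"
      using wlen_refl_le[OF r(1)] r(2) by linarith
    then show ?thesis unfolding factor_def using wr refl_in_weyl[OF r(1)] by (auto intro!: bexI[of _ "refl r"])
  qed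
  have "factor w"
    unfolding factor_def using w weyl_wordmap[of "[]" I] wlen_wordmap_le[of "[]" I]
    by (auto intro!: bexI[of _ id])
  then obtain v where "factor v" and v_min: "\<And>v'. factor v' \<Longrightarrow> wlen D v \<le> wlen D v'"
    using ex_has_least_nat[where P=factor and m="wlen D"] by blast
  then obtain x where v: "v \<in> weyl D" and x: "x \<in> weyl I" "w = v \<circ> x" "wlen D w = wlen D v + wlen I x"
    unfolding factor_def by blast
  have "wlen D v \<le> wlen D (v \<circ> refl r)" if r: "r \<in> I" for r
  proof (rule ccontr)
    assume lt: "\<not> ?thesis"
    have vr: "v \<circ> refl r \<in> weyl D" and rx: "refl r \<circ> x \<in> weyl I"
      using weyl_comp_refl[OF v] weyl_comp[OF refl_in_weyl[OF r] x(1)] r ID by auto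
    have w_eq: "w = (v \<circ> refl r) \<circ> (refl r \<circ> x)" using x(2) by (simp add: fun_eq_iff)
    have "wlen I (refl r \<circ> x) \<le> 1 + wlen I x"
      using wlen_comp_le[OF refl_in_weyl[OF r] x(1)] wlen_refl_le[OF r] by simp
    moreover have "wlen D w \<le> wlen D (v \<circ> refl r) + wlen I (refl r \<circ> x)"
      using wlen_comp_le[OF vr rx ID] w_eq by simp
    ultimately have "factor (v \<circ> refl r)"
      unfolding factor_def using vr rx w_eq x(3) lt by (intro conjI bexI[of _ "refl r \<circ> x"]) auto
    then show False using v_min lt by fastforce
  qed
  moreover have "wlen D v < wlen D w" if "r \<in> I" "wlen D (w \<circ> refl r) < wlen D w" for r
    using v_min[OF factor_refl[OF that]] that(2) by simp
  ultimately show thesis using that v x by blast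
qed

lemma weyl_right_descent:
  assumes "w \<in> weyl D" "w \<noteq> id"
  obtains s where "s \<in> D" "wlen D (w \<circ> refl s) < wlen D w"
proof -
  obtain as where as: "set as \<subseteq> D" "length as = wlen D w" "wordmap as = w"
    using wlen_word_exists[OF assms(1)] by blast
  then obtain bs s where "as = bs @ [s]"
    using assms(2) by (metis rev_exhaust wordmap.simps(1))
  then show thesis
    using that[of s] as wlen_wordmap_le[of bs D] wordmap_snoc_refl[of bs s] by simp
qed

lemma weyl_simple_root_nonneg:
  assumes D: "simple_system D"
  shows "w \<in> weyl D \<Longrightarrow> s \<in> D \<Longrightarrow> wlen D w \<le> wlen D (w \<circ> refl s) \<Longrightarrow> nonneg_comb D (w s)"
proof (induction "wlen D w" arbitrary: w s rule: less_induct)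
  case less
  show ?case
  proof (cases "w = id")
    case True
    then show ?thesis
      using nonneg_comb_base[OF _ less.prems(2)] D by (simp add: simple_system_def)
  next
    case False
    then obtain s' where s': "s' \<in> D" and shorter: "wlen D (w \<circ> refl s') < wlen D w"
      using weyl_right_descent[OF less.prems(1)] by blast
    then have "s \<noteq> s'" using less.prems(3) by auto
    define I where "I = {s, s'}"
    have ID: "I \<subseteq> D" using less.prems(2) s' I_def by auto
    obtain v x where v: "v \<in> weyl D" "\<And>r. r \<in> I \<Longrightarrow> wlen D v \<le> wlen D (v \<circ> refl r)"
        and x: "x \<in> weyl I" "w = v \<circ> x" "wlen D w = wlen D v + wlen I x"
        and v_shorter: "wlen D v < wlen D w"
      using weyl_min_coset_factor[OF less.prems(1) ID] shorter I_def by (metis insertI1 insertI2)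
    have "nonneg_comb D (v s)" "nonneg_comb D (v s')"
      using less.hyps[OF v_shorter v(1)] v(2) less.prems(2) s' I_def by auto
    moreover have "wlen I x \<le> wlen I (x \<circ> refl s)"
    proof (rule ccontr)
      assume "\<not> ?thesis"
      moreover have "wlen D (w \<circ> refl s) \<le> wlen D v + wlen I (x \<circ> refl s)"
        using wlen_comp_le[OF v(1) weyl_comp_refl[OF x(1)] ID] x(2) I_def by (simp add: comp_assoc)
      ultimately show False using less.prems(3) x(3) by simp
    qed
    then obtain \<alpha> \<beta> where "0 \<le> \<alpha>" "0 \<le> \<beta>" "x s = \<alpha> *\<^sub>R s + \<beta> *\<^sub>R s'"
      using rank2_nonneg_image[OF D less.prems(2) s' \<open>s \<noteq> s'\<close>] x(1) I_def by blast
    moreover have "w s = \<alpha> *\<^sub>R v s + \<beta> *\<^sub>R v s'"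
      using x(2) calculation(5) linear_weyl[OF v(1)] by (simp add: linear_add linear_scale)
    ultimately show ?thesis by (metis nonneg_comb_add nonneg_comb_scaleR)
  qed
qed

lemma inner_coweight:
  assumes D: "simple_system D" and "a \<in> D" "b \<in> D"
  shows "b \<bullet> coweight D a = (if b = a then 1 else 0)"
proof -
  have ind: "independent D" and sp: "span D = UNIV" using D unfolding simple_system_def by blast+
  obtain g :: "'a \<Rightarrow> real" where g: "linear g" "\<forall>x\<in>D. g x = (if x = a then 1 else 0)"
    using linear_independent_extend[OF ind, where f="\<lambda>x. if x = a then 1 else 0"] by blast
  define v where "v = (\<Sum>i\<in>Basis. g i *\<^sub>R i)"
  have gv: "b \<bullet> v = g b" for b
  proof -
    have "g b = g (\<Sum>i\<in>Basis. (b \<bullet> i) *\<^sub>R i)" by (simp add: euclidean_representation)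
    also have "\<dots> = b \<bullet> v"
      unfolding v_def by (simp add: linear_sum[OF g(1)] linear_scale[OF g(1)] inner_sum_right mult.commute)
    finally show ?thesis by simp
  qed
  have v: "\<forall>b\<in>D. b \<bullet> v = (if b = a then 1 else 0)" using gv g(2) by simp
  have "coweight D a = v" unfolding coweight_def
  proof (rule the_equality)
    fix v' assume v': "\<forall>b\<in>D. b \<bullet> v' = (if b = a then 1 else 0)"
    have "\<forall>b\<in>D. orthogonal (v' - v) b"
      using v v' by (simp add: orthogonal_def inner_diff_right inner_commute)
    then have "orthogonal (v' - v) (v' - v)"
      using orthogonal_to_span[of "v' - v" D "v' - v"] sp by auto
    then show "v' = v" by (simp add: orthogonal_def)
  qed (rule v)
  then show ?thesis using v \<open>b \<in> D\<close> by simp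
qed

lemma inner_rho_vee_simple: "simple_system D \<Longrightarrow> a \<in> D \<Longrightarrow> a \<bullet> rho_vee D = 1"
  unfolding rho_vee_def inner_sum_right
  by (simp add: inner_coweight sum.delta simple_system_def cong: sum.cong)

lemma inner_rho_vee_pos:
  assumes D: "simple_system D" and v: "nonneg_comb D v" "v \<noteq> 0"
  shows "v \<bullet> rho_vee D > 0"
proof -
  obtain c where c: "\<forall>d\<in>D. 0 \<le> c d" "v = (\<Sum>d\<in>D. c d *\<^sub>R d)"
    using v(1) unfolding nonneg_comb_def by blast
  obtain d where d: "d \<in> D" "c d \<noteq> 0"
    using c(2) v(2) sum.neutral[of D "\<lambda>d. c d *\<^sub>R d"] by force
  have "v \<bullet> rho_vee D = (\<Sum>e\<in>D. c e)"
    using c(2) inner_rho_vee_simple[OF D] by (simp add: inner_sum_left)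
  also have "\<dots> > 0"
    using d c(1) D by (intro sum_pos2[of D d]) (auto simp: simple_system_def)
  finally show ?thesis .
qed

lemma inv_weyl_comp_refl: "w \<in> weyl D \<Longrightarrow> inv (w \<circ> refl a) = refl a \<circ> inv w"
  unfolding weyl_def
  by (auto simp: o_inv_distrib bij_wordmap inv_refl bij_betw_byWitness[of _ "refl a"])

text \<open>Since \<open>w\<close> is orthogonal, \<open>a(w\<^sup>-\<^sup>1 \<rho>\<^sup>\<or>) = (w a)(\<rho>\<^sup>\<or>)\<close>, and \<open>w a\<close> is a positive root.\<close>

lemma inner_inv_weyl_rho_vee_pos:
  assumes D: "simple_system D" and w: "w \<in> weyl D" and a: "a \<in> D"
    and len: "wlen D w \<le> wlen D (w \<circ> refl a)"
  shows "a \<bullet> inv w (rho_vee D) > 0"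
proof -
  obtain as where w_eq: "w = wordmap as" using w unfolding weyl_def by blast
  have "a \<noteq> 0" using simple_system_nonzero[OF D] a by blast
  then have "w a \<noteq> 0" using inner_wordmap[of as a a] w_eq by auto
  have "a \<bullet> inv w (rho_vee D) = w a \<bullet> rho_vee D"
    using inner_wordmap[of as a "inv w (rho_vee D)"] w_eq
    by (simp add: inv_wordmap wordmap_wordmap_rev)
  also have "\<dots> > 0"
    using inner_rho_vee_pos[OF D weyl_simple_root_nonneg[OF D w a len] \<open>w a \<noteq> 0\<close>] .
  finally show ?thesis .
qed

section \<open>Integrals on \<open>[0, T)\<close> with power-law behaviour at \<open>T\<close>\<close>

lemma continuous_on_Ico_of_Icc:
  fixes f :: "real \<Rightarrow> 'b::topological_space"
  assumes "\<And>b. 0 \<le> b \<Longrightarrow> b < T \<Longrightarrow> continuous_on {0..b} f"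
  shows "continuous_on {0..<T} f"
  unfolding continuous_on_eq_continuous_within
proof
  fix t assume t: "t \<in> {0..<T}"
  define b where "b = (t + T) / 2"
  have b: "0 \<le> b" "b < T" "t < b" using t unfolding b_def by auto
  have "continuous (at t within {0..b}) f"
    using assms[OF b(1,2)] t b unfolding continuous_on_eq_continuous_within by auto
  moreover have "at t within {0..<T} = at t within {0..b}"
    by (rule at_within_nhd[of t "{..<b}"]) (use b in auto)
  ultimately show "continuous (at t within {0..<T}) f" by simp
qed

lemma continuous_on_indefinite_integral_Ico:
  fixes f :: "real \<Rightarrow> real"
  assumes "continuous_on {0..<T} f"
  shows "continuous_on {0..<T} (\<lambda>t. integral {0..t} f)"
proof (rule continuous_on_Ico_of_Icc)
  fix b assume "0 \<le> b" "b < T"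
  then have "continuous_on {0..b} f" using assms by (rule_tac continuous_on_subset) auto
  then show "continuous_on {0..b} (\<lambda>t. integral {0..t} f)"
    by (intro indefinite_integral_continuous_1 integrable_continuous_interval)
qed

lemma indefinite_integral_has_real_derivative_Ico:
  fixes f :: "real \<Rightarrow> real"
  assumes "continuous_on {0..<T} f" "0 < t" "t < T"
  shows "((\<lambda>t. integral {0..t} f) has_real_derivative f t) (at t)"
proof -
  define b where "b = (t + T) / 2"
  have b: "0 \<le> b" "b < T" "t < b" using assms unfolding b_def by auto
  have "continuous_on {0..b} f" using assms b by (rule_tac continuous_on_subset) auto
  then have "((\<lambda>t. integral {0..t} f) has_real_derivative f t) (at t within {0..b})"
    by (rule integral_has_real_derivative) (use assms b in auto)
  moreover have "at t within {0..b} = at t"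
    by (rule at_within_interior) (use assms b in auto)
  ultimately show ?thesis by simp
qed

lemma tendsto_restrict_Icc:
  fixes tn :: "nat \<Rightarrow> real"
  assumes "tn \<longlonglongrightarrow> T" "\<And>n. tn n < T"
  shows "(\<lambda>n. if x \<in> {a..tn n} then f x else 0) \<longlonglongrightarrow> (if x \<in> {a..<T} then f x else 0)"
proof (cases "x < T")
  case True
  have "eventually (\<lambda>n. x < tn n) sequentially" by (rule order_tendstoD(1)[OF assms(1) True])
  then show ?thesis
    by (rule tendsto_eventually[OF eventually_mono]) (use True in auto)
next
  case False
  then have "(\<lambda>n. if x \<in> {a..tn n} then f x else 0) = (\<lambda>n. 0)"
    using assms(2) False by (auto simp: fun_eq_iff) (meson le_less_trans)
  then show ?thesis using False by simp
qed

lemma integrable_on_Icc_of_bounded_integrals: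
  fixes f :: "real \<Rightarrow> real"
  assumes T: "0 < T" and f: "continuous_on {0..<T} f" "\<And>t. 0 \<le> t \<Longrightarrow> t < T \<Longrightarrow> 0 \<le> f t"
    and bounded: "\<And>t. 0 \<le> t \<Longrightarrow> t < T \<Longrightarrow> integral {0..t} f \<le> M"
  shows "f integrable_on {0..T}"
proof -
  define tn where "tn n = T - T * inverse (real (Suc n))" for n
  define fn where "fn n x = (if x \<in> {0..tn n} then f x else 0)" for n x
  have tn: "0 \<le> tn n" "tn n < T" "tn n \<le> tn (Suc n)" for n
    using T unfolding tn_def by (auto simp: field_simps)
  have "tn \<longlonglongrightarrow> T - T * 0"
    unfolding tn_def by (intro tendsto_intros LIMSEQ_inverse_real_of_nat)
  then have lim: "(\<lambda>n. fn n x) \<longlonglongrightarrow> (if x \<in> {0..<T} then f x else 0)" for x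
    unfolding fn_def by (intro tendsto_restrict_Icc tn(2)) simp
  have int_f: "f integrable_on {0..tn n}" for n
    using tn(2)[of n] by (intro integrable_continuous_interval continuous_on_subset[OF f(1)]) auto
  have sub: "{0..tn n} \<inter> {0..T} = {0..tn n}" for n using tn[of n] by auto
  have int_fn: "fn n integrable_on {0..T}" and integral_fn: "integral {0..T} (fn n) = integral {0..tn n} f" for n
    unfolding fn_def integrable_restrict_Int integral_restrict_Int sub by (rule int_f) simp
  have mono: "fn n x \<le> fn (Suc n) x" if "x \<in> {0..T}" for n x
    using f(2)[of x] that tn[of n] tn[of "Suc n"] unfolding fn_def by auto
  have "\<bar>integral {0..tn n} f\<bar> \<le> M" for n
    using tn(1,2)[of n] f(2) bounded by (subst abs_of_nonneg) (auto intro!: integral_nonneg[OF int_f])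
  then have "bounded (range (\<lambda>n. integral {0..T} (fn n)))"
    unfolding bounded_real integral_fn by blast
  then have "(\<lambda>x. if x \<in> {0..<T} then f x else 0) integrable_on {0..T}"
    using monotone_convergence_increasing[OF int_fn mono lim] by blast
  then show ?thesis
    by (rule integrable_spike[where S="{T}"]) auto
qed

lemma indefinite_integral_tendsto_at_left:
  fixes g :: "real \<Rightarrow> real"
  assumes "g integrable_on {0..T}" "0 < T"
  shows "((\<lambda>t. integral {0..t} g) \<longlongrightarrow> integral {0..T} g) (at_left T)"
proof -
  have "((\<lambda>t. integral {0..t} g) \<longlongrightarrow> integral {0..T} g) (at T within {0..T})"
    using indefinite_integral_continuous_1[OF assms(1)] assms(2) unfolding continuous_on_def by auto
  then show ?thesis using at_within_Icc_at_left[OF assms(2)] by simp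
qed

lemma integral_less_total_if_eventually:
  fixes g :: "real \<Rightarrow> real"
  assumes g: "g integrable_on {0..T}" "\<And>s. 0 \<le> s \<Longrightarrow> s < T \<Longrightarrow> 0 \<le> g s"
    and ev: "eventually (\<lambda>t. integral {0..t} g < integral {0..T} g) (at_left T)"
    and t: "0 \<le> t" "t < T"
  shows "integral {0..t} g < integral {0..T} g"
proof -
  obtain b where b: "b < T" "\<And>y. b < y \<Longrightarrow> y < T \<Longrightarrow> integral {0..y} g < integral {0..T} g"
    using ev unfolding eventually_at_left_field by blast
  define t' where "t' = (max b t + T) / 2"
  have t': "b < t'" "t \<le> t'" "t' < T" using b t unfolding t'_def by auto
  have "integral {0..t} g \<le> integral {0..t'} g"
    using t t' g by (intro integral_subset_le integrable_subinterval_real[OF g(1)]) auto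
  also have "\<dots> < integral {0..T} g" using b(2) t' by simp
  finally show ?thesis .
qed

lemma eventually_at_left_pos: "0 < T \<Longrightarrow> eventually (\<lambda>t. 0 < t \<and> t < (T::real)) (at_left T)"
  using eventually_at_left_real[of 0 T] by (auto elim: eventually_mono)

lemma tendsto_powr_diff_at_left: "0 < k \<Longrightarrow> ((\<lambda>t. (T - t) powr k) \<longlongrightarrow> 0) (at_left (T::real))"
proof (rule tendsto_zero_powrI[OF _ tendsto_const])
  show "((\<lambda>t. T - t) \<longlongrightarrow> 0) (at_left T)"
    using tendsto_diff[OF tendsto_const tendsto_ident_at, of T T "{..<T}"] by simp
  show "\<forall>\<^sub>F x in at_left T. 0 \<le> T - x"
    by (auto simp: eventually_at_left_field intro: exI[of _ "T - 1"])
qed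

lemma has_real_derivative_powr_diff:
  "t < T \<Longrightarrow> ((\<lambda>x. (T - x) powr r) has_real_derivative - r * (T - t) powr (r - 1)) (at t)"
  using DERIV_fun_powr[of "\<lambda>x. T - x" "-1" t r] by (auto intro!: derivative_eq_intros)

lemma has_integral_powr_diff:
  fixes x y T k :: real
  assumes "0 < k" "x \<le> y" "y < T"
  shows "((\<lambda>s. (T - s) powr (k - 1)) has_integral ((T - x) powr k - (T - y) powr k) / k) {x..y}"
proof -
  define F where "F s = - ((T - s) powr k / k)" for s
  have "((\<lambda>s. (T - s) powr (k - 1)) has_integral F y - F x) {x..y}"
  proof (rule fundamental_theorem_of_calculus[where f=F])
    fix s assume "s \<in> {x..y}"
    then have "(F has_real_derivative (T - s) powr (k - 1)) (at s)"
      unfolding F_def[abs_def] using assms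
      by (auto intro!: derivative_eq_intros has_real_derivative_powr_diff[THEN DERIV_cong])
    then show "(F has_vector_derivative (T - s) powr (k - 1)) (at s within {x..y})"
      by (simp add: has_real_derivative_iff_has_vector_derivative[symmetric] has_field_derivative_at_within)
  qed (use assms in simp)
  then show ?thesis by (simp add: F_def diff_divide_distrib)
qed

context
  fixes g :: "real \<Rightarrow> real" and T k K :: real
  assumes T: "0 < T" and k: "0 < k" and g: "continuous_on {0..<T} g"
    and g_lim: "((\<lambda>s. g s / (T - s) powr (k - 1)) \<longlongrightarrow> K) (at_left T)"
begin

lemma integrable_of_powr_asymptotic:
  assumes K: "0 < K" and g_nonneg: "\<And>s. 0 \<le> s \<Longrightarrow> s < T \<Longrightarrow> 0 \<le> g s"
  shows "g integrable_on {0..T}"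
proof -
  have "eventually (\<lambda>s. g s / (T - s) powr (k - 1) < 2 * K) (at_left T)"
    using order_tendstoD(2)[OF g_lim, of "2 * K"] K by simp
  then obtain b where b: "b < T" "\<And>s. b < s \<Longrightarrow> s < T \<Longrightarrow> g s / (T - s) powr (k - 1) < 2 * K"
    unfolding eventually_at_left_field by blast
  define t1 where "t1 = max 0 ((b + T) / 2)"
  have t1: "0 \<le> t1" "t1 < T" "b < t1" using b T unfolding t1_def by (auto simp: less_max_iff_disj)
  have int_g: "g integrable_on {x..y}" if "0 \<le> x" "y < T" for x y
    using that by (intro integrable_continuous_interval continuous_on_subset[OF g]) auto
  have "integral {0..t} g \<le> integral {0..t1} g + (2 * K / k) * (T - t1) powr k"
    if t: "0 \<le> t" "t < T" for t
  proof (cases "t \<le> t1")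
    case True
    have "integral {0..t} g \<le> integral {0..t1} g"
      using True t t1 int_g g_nonneg by (intro integral_subset_le) auto
    moreover have "0 \<le> (2 * K / k) * (T - t1) powr k" using K k by simp
    ultimately show ?thesis by linarith
  next
    case False
    have H: "((\<lambda>s. 2 * K * (T - s) powr (k - 1)) has_integral
        2 * K * (((T - t1) powr k - (T - t) powr k) / k)) {t1..t}"
      using has_integral_mult_right[OF has_integral_powr_diff[OF k _ t(2), of t1]] False by simp
    have "g s \<le> 2 * K * (T - s) powr (k - 1)" if "t1 \<le> s" "s < T" for s
      using b(2)[of s] that t1 by (simp add: divide_less_eq)
    then have "integral {t1..t} g \<le> integral {t1..t} (\<lambda>s. 2 * K * (T - s) powr (k - 1))"
      using t t1 by (intro integral_le int_g has_integral_integrable[OF H]) auto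
    also have "\<dots> = 2 * K * (((T - t1) powr k - (T - t) powr k) / k)" using H by (rule integral_unique)
    also have "\<dots> \<le> (2 * K / k) * (T - t1) powr k" using K k by (simp add: field_simps)
    moreover have "integral {0..t1} g + integral {t1..t} g = integral {0..t} g"
      using False t t1 int_g by (intro Henstock_Kurzweil_Integration.integral_combine) auto
    ultimately show ?thesis by linarith
  qed
  then show ?thesis
    using integrable_on_Icc_of_bounded_integrals[OF T g] g_nonneg by blast
qed

text \<open>Both asymptotics below are l'H\^opital's rule for \<open>\<integral>g\<close> against \<open>(T - t)\<^sup>k\<close>.\<close>

lemma tail_integral_asymptotic:
  assumes "g integrable_on {0..T}"
  shows "((\<lambda>t. (integral {0..T} g - integral {0..t} g) / (T - t) powr k) \<longlongrightarrow> K / k) (at_left T)"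
proof (rule lhopital_left[where f'="\<lambda>t. - g t" and g'="\<lambda>t. - k * (T - t) powr (k - 1)"])
  from tendsto_diff[OF tendsto_const indefinite_integral_tendsto_at_left[OF assms T],
      of "integral {0..T} g"]
  show "((\<lambda>t. integral {0..T} g - integral {0..t} g) \<longlongrightarrow> 0) (at_left T)" by simp
  show "((\<lambda>t. (T - t) powr k) \<longlongrightarrow> 0) (at_left T)" by (rule tendsto_powr_diff_at_left[OF k])
  show "\<forall>\<^sub>F t in at_left T. (T - t) powr k \<noteq> 0" "\<forall>\<^sub>F t in at_left T. - k * (T - t) powr (k - 1) \<noteq> 0"
    using eventually_at_left_pos[OF T] k by (auto elim: eventually_mono)
  show "\<forall>\<^sub>F t in at_left T. ((\<lambda>t. integral {0..T} g - integral {0..t} g) has_real_derivative - g t) (at t)"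
    using eventually_at_left_pos[OF T]
    by (auto elim!: eventually_mono intro!: derivative_eq_intros indefinite_integral_has_real_derivative_Ico[OF g])
  show "\<forall>\<^sub>F t in at_left T. ((\<lambda>t. (T - t) powr k) has_real_derivative - k * (T - t) powr (k - 1)) (at t)"
    by (rule eventually_mono[OF eventually_at_left_pos[OF T]]) (rule has_real_derivative_powr_diff, simp)
  have "((\<lambda>t. (g t / (T - t) powr (k - 1)) / k) \<longlongrightarrow> K / k) (at_left T)"
    by (intro tendsto_divide g_lim tendsto_const) (use k in simp)
  then show "((\<lambda>t. - g t / (- k * (T - t) powr (k - 1))) \<longlongrightarrow> K / k) (at_left T)"
    by (simp add: mult.commute)
qed

end

lemma head_integral_asymptotic:
  fixes h :: "real \<Rightarrow> real"
  assumes T: "0 < T" and k: "0 < k" and h: "continuous_on {0..<T} h"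
    and h_lim: "((\<lambda>s. h s / (T - s) powr (- k - 1)) \<longlongrightarrow> K) (at_left T)"
  shows "((\<lambda>t. integral {0..t} h * (T - t) powr k) \<longlongrightarrow> K / k) (at_left T)"
proof -
  have "((\<lambda>t. integral {0..t} h / (T - t) powr (- k)) \<longlongrightarrow> K / k) (at_left T)"
  proof (rule lhopital_left_at_top[where f'=h and g'="\<lambda>t. k * (T - t) powr (- k - 1)"])
    have "LIM t at_left T. inverse ((T - t) powr k) :> at_top"
      using eventually_at_left_pos[OF T]
      by (intro filterlim_inverse_at_top[OF tendsto_powr_diff_at_left[OF k]]) (auto elim: eventually_mono)
    then show "LIM t at_left T. (T - t) powr (- k) :> at_top"
      by (simp add: powr_minus)
    show "\<forall>\<^sub>F t in at_left T. k * (T - t) powr (- k - 1) \<noteq> 0"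
      using eventually_at_left_pos[OF T] k by (auto elim: eventually_mono)
    show "\<forall>\<^sub>F t in at_left T. ((\<lambda>t. integral {0..t} h) has_real_derivative h t) (at t)"
      using eventually_at_left_pos[OF T]
      by (auto elim!: eventually_mono intro!: indefinite_integral_has_real_derivative_Ico[OF h])
    show "\<forall>\<^sub>F t in at_left T. ((\<lambda>t. (T - t) powr (- k)) has_real_derivative k * (T - t) powr (- k - 1)) (at t)"
      using eventually_at_left_pos[OF T]
      by (auto elim!: eventually_mono dest!: has_real_derivative_powr_diff[of _ T "- k"])
    have "((\<lambda>t. (h t / (T - t) powr (- k - 1)) / k) \<longlongrightarrow> K / k) (at_left T)"
      by (intro tendsto_divide h_lim tendsto_const) (use k in simp)
    then show "((\<lambda>t. h t / (k * (T - t) powr (- k - 1))) \<longlongrightarrow> K / k) (at_left T)"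
      by (simp add: mult.commute)
  qed
  then show ?thesis
    by (rule Lim_transform_eventually)
      (use eventually_at_left_pos[OF T] in \<open>auto elim!: eventually_mono simp: powr_minus divide_inverse\<close>)
qed

text \<open>The substitution \<open>u = 1 + \<kappa> \<integral>h\<close> turns \<open>\<integral> h / u\<^sup>2\<close> into \<open>\<integral> du / (\<kappa> u\<^sup>2)\<close>.\<close>

lemma integral_div_square_primitive:
  fixes h :: "real \<Rightarrow> real" and \<kappa> :: real
  defines "u \<equiv> \<lambda>s. 1 + \<kappa> * integral {0..s} h"
  assumes h: "continuous_on {0..<T} h" and \<kappa>: "\<kappa> \<noteq> 0"
    and u: "\<And>s. 0 \<le> s \<Longrightarrow> s \<le> t \<Longrightarrow> 0 < u s" and t: "0 \<le> t" "t < T"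
  shows "integral {0..t} (\<lambda>s. h s / (u s)\<^sup>2) = (1 - 1 / u t) / \<kappa>"
proof -
  have "((\<lambda>s. h s / (u s)\<^sup>2) has_integral (1 - 1 / u t) / \<kappa> - (1 - 1 / u 0) / \<kappa>) {0..t}"
  proof (rule fundamental_theorem_of_calculus)
    fix x assume x: "x \<in> {0..t}"
    have "continuous_on {0..t} h" using t by (intro continuous_on_subset[OF h]) auto
    then have "((\<lambda>s. integral {0..s} h) has_real_derivative h x) (at x within {0..t})"
      by (rule integral_has_real_derivative[OF _ x])
    then have "(u has_real_derivative \<kappa> * h x) (at x within {0..t})"
      unfolding u_def by (auto intro!: derivative_eq_intros)
    then have "((\<lambda>s. (1 - 1 / u s) / \<kappa>) has_real_derivative h x / (u x)\<^sup>2) (at x within {0..t})"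
      using u[of x] x \<kappa> by (auto intro!: derivative_eq_intros simp: field_simps power2_eq_square)
    then show "((\<lambda>s. (1 - 1 / u s) / \<kappa>) has_vector_derivative h x / (u x)\<^sup>2) (at x within {0..t})"
      by (simp add: has_real_derivative_iff_has_vector_derivative)
  qed (use t in simp)
  then show ?thesis by (simp add: u_def integral_unique)
qed

section \<open>Low paths and the operator \<open>e\<^sub>\<alpha>\<^sup>-\<^sup>\<infinity>\<close>\<close>

definition log_asymptotic :: "real \<Rightarrow> 'a::real_normed_vector \<Rightarrow> (real \<Rightarrow> 'a) \<Rightarrow> bool" where
  "log_asymptotic T v p \<longleftrightarrow> (\<exists>C. ((\<lambda>t. p t - (C + ln (T - t) *\<^sub>R v)) \<longlongrightarrow> 0) (at_left T))"

text \<open>The constant \<open>c\<^sub>w\<close> is absorbed into the free constant \<open>C\<^sub>\<pi>\<close>.\<close>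

lemma low_path_iff:
  "low_path D T w p \<longleftrightarrow> continuous_on {0..<T} p \<and> p 0 = 0 \<and>
     log_asymptotic T (rho_vee D - inv w (rho_vee D)) p"
proof -
  have shift: "(\<exists>C. Q (C + c)) \<longleftrightarrow> (\<exists>C. Q C)" for Q :: "'a \<Rightarrow> bool" and c
    by (metis diff_add_cancel)
  show ?thesis
    unfolding low_path_def log_asymptotic_def
    using shift[of "\<lambda>C. ((\<lambda>t. p t - (C + ln (T - t) *\<^sub>R (rho_vee D - inv w (rho_vee D)))) \<longlongrightarrow> 0) (at_left T)"
        "cconst D w"]
    by (simp add: ac_simps)
qed

lemma log_asymptotic_add_ln:
  assumes p: "log_asymptotic T v p" and T: "0 < T"
    and \<phi>: "((\<lambda>t. \<phi> t / (T - t) powr m) \<longlongrightarrow> L) (at_left T)" and L: "0 < L"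
  shows "log_asymptotic T (v + m *\<^sub>R x) (\<lambda>t. p t + ln (\<phi> t) *\<^sub>R x)"
proof -
  obtain C where C: "((\<lambda>t. p t - (C + ln (T - t) *\<^sub>R v)) \<longlongrightarrow> 0) (at_left T)"
    using p unfolding log_asymptotic_def by blast
  have "((\<lambda>t. (p t - (C + ln (T - t) *\<^sub>R v)) + (ln (\<phi> t / (T - t) powr m) - ln L) *\<^sub>R x)
      \<longlongrightarrow> 0 + (ln L - ln L) *\<^sub>R x) (at_left T)"
    using L by (intro tendsto_intros C \<phi>) auto
  then have lim: "((\<lambda>t. (p t - (C + ln (T - t) *\<^sub>R v)) + (ln (\<phi> t / (T - t) powr m) - ln L) *\<^sub>R x)
      \<longlongrightarrow> 0) (at_left T)"
    by simp
  have "eventually (\<lambda>t. \<phi> t / (T - t) powr m > 0 \<and> t < T) (at_left T)"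
    using order_tendstoD(1)[OF \<phi> L] eventually_at_left_pos[OF T] by eventually_elim simp
  then have eq: "eventually (\<lambda>t. (p t - (C + ln (T - t) *\<^sub>R v)) + (ln (\<phi> t / (T - t) powr m) - ln L) *\<^sub>R x
      = (p t + ln (\<phi> t) *\<^sub>R x) - ((C + ln L *\<^sub>R x) + ln (T - t) *\<^sub>R (v + m *\<^sub>R x))) (at_left T)"
    by eventually_elim (auto simp: zero_less_divide_iff ln_div ln_powr algebra_simps)
  show ?thesis
    unfolding log_asymptotic_def using Lim_transform_eventually[OF lim eq] by blast
qed

lemma exp_inner_log_asymptotic:
  assumes p: "log_asymptotic T v p" and T: "0 < T" and v: "a \<bullet> v = - m"
  shows "\<exists>K>0. ((\<lambda>s. exp (- (a \<bullet> p s)) / (T - s) powr m) \<longlongrightarrow> K) (at_left T)"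
proof -
  obtain C where C: "((\<lambda>t. p t - (C + ln (T - t) *\<^sub>R v)) \<longlongrightarrow> 0) (at_left T)"
    using p unfolding log_asymptotic_def by blast
  have "((\<lambda>s. exp (- (a \<bullet> C)) * exp (- (a \<bullet> (p s - (C + ln (T - s) *\<^sub>R v)))))
      \<longlongrightarrow> exp (- (a \<bullet> C)) * exp (- (a \<bullet> 0))) (at_left T)"
    by (intro tendsto_intros C)
  moreover have "eventually (\<lambda>s. exp (- (a \<bullet> C)) * exp (- (a \<bullet> (p s - (C + ln (T - s) *\<^sub>R v))))
      = exp (- (a \<bullet> p s)) / (T - s) powr m) (at_left T)"
    using eventually_at_left_pos[OF T]
    by eventually_elim (simp add: inner_diff_right inner_add_right v powr_def exp_add exp_diff exp_minus
        field_simps)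
  ultimately show ?thesis
    by (intro exI[of _ "exp (- (a \<bullet> C))"]) (auto intro: Lim_transform_eventually)
qed

lemma exp_inner_add_ln_coroot:
  assumes "a \<noteq> 0" "0 < y"
  shows "exp (- (a \<bullet> (x + ln y *\<^sub>R coroot a))) = exp (- (a \<bullet> x)) / y\<^sup>2"
proof -
  have "a \<bullet> (x + ln y *\<^sub>R coroot a) = a \<bullet> x + 2 * ln y"
    using assms(1) by (simp add: inner_add_right inner_coroot_self)
  moreover have "exp (2 * ln y) = y\<^sup>2" using assms(2) by (simp add: exp_double)
  ultimately show ?thesis by (simp add: exp_diff exp_minus divide_inverse)
qed

lemma eminf_log_asymptotic:
  fixes a v :: "'a::euclidean_space" and p :: "real \<Rightarrow> 'a"
  defines "g \<equiv> \<lambda>s. exp (- (a \<bullet> p s))"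
  assumes T: "0 < T" and k: "0 < k" and v: "a \<bullet> v = 1 - k"
    and p: "continuous_on {0..<T} p" "log_asymptotic T v p"
  shows "g integrable_on {0..T}"
    and "\<And>t. 0 \<le> t \<Longrightarrow> t < T \<Longrightarrow> integral {0..t} g < integral {0..T} g"
    and "continuous_on {0..<T} (eminf a T p)"
    and "log_asymptotic T (v + k *\<^sub>R coroot a) (eminf a T p)"
proof -
  obtain K where K: "0 < K" and g_lim: "((\<lambda>s. g s / (T - s) powr (k - 1)) \<longlongrightarrow> K) (at_left T)"
    using exp_inner_log_asymptotic[OF p(2) T, of a "k - 1"] v unfolding g_def by auto
  have g: "continuous_on {0..<T} g" unfolding g_def by (intro continuous_intros p(1))
  show int_g: "g integrable_on {0..T}"
    using integrable_of_powr_asymptotic[OF T k g g_lim K] by (simp add: g_def)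
  define I where "I = integral {0..T} g"
  have tail: "((\<lambda>t. (I - integral {0..t} g) / (T - t) powr k) \<longlongrightarrow> K / k) (at_left T)"
    unfolding I_def by (rule tail_integral_asymptotic[OF T k g g_lim int_g])
  have "eventually (\<lambda>t. (I - integral {0..t} g) / (T - t) powr k > 0 \<and> t < T) (at_left T)"
    using order_tendstoD(1)[OF tail, of 0] eventually_at_left_pos[OF T] K k
    by (auto elim: eventually_elim2)
  then have "eventually (\<lambda>t. integral {0..t} g < I) (at_left T)"
    by eventually_elim (simp add: zero_less_divide_iff)
  then show less: "integral {0..t} g < I" if "0 \<le> t" "t < T" for t
    using integral_less_total_if_eventually[OF int_g _ _ that] unfolding I_def g_def by simp
  then have I: "0 < I" using less[of 0] T by simp
  have "1 - integral {0..t} g / I \<noteq> 0" if "t \<in> {0..<T}" for t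
    using less[of t] that I by (simp add: field_simps)
  then show "continuous_on {0..<T} (eminf a T p)"
    unfolding eminf_def g_def[symmetric] I_def[symmetric] using I
    by (intro continuous_intros continuous_on_ln p(1) continuous_on_indefinite_integral_Ico g) auto
  have "((\<lambda>t. (1 - integral {0..t} g / I) / (T - t) powr k) \<longlongrightarrow> (K / k) / I) (at_left T)"
    using tendsto_divide[OF tail tendsto_const, of I] I by (simp add: diff_divide_distrib mult.commute)
  from log_asymptotic_add_ln[OF p(2) T this, of "coroot a"]
  show "log_asymptotic T (v + k *\<^sub>R coroot a) (eminf a T p)"
    using K k I unfolding eminf_def g_def I_def by simp
qed

lemma one_plus_integral_asymptotic:
  fixes a v :: "'a::euclidean_space" and e :: "real \<Rightarrow> 'a"
  assumes T: "0 < T" and k: "0 < k" and c: "0 < c" and v: "a \<bullet> v = 1 + k"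
    and e: "continuous_on {0..<T} e" "log_asymptotic T v e"
  shows "\<exists>L>0. ((\<lambda>t. (1 + c * integral {0..t} (\<lambda>s. exp (- (a \<bullet> e s)))) / (T - t) powr - k)
    \<longlongrightarrow> L) (at_left T)"
proof -
  define F where "F t = integral {0..t} (\<lambda>s. exp (- (a \<bullet> e s)))" for t
  obtain K where K: "0 < K"
    and h_lim: "((\<lambda>s. exp (- (a \<bullet> e s)) / (T - s) powr (- k - 1)) \<longlongrightarrow> K) (at_left T)"
    using exp_inner_log_asymptotic[OF e(2) T, of a "- k - 1"] v by auto
  have "continuous_on {0..<T} (\<lambda>s. exp (- (a \<bullet> e s)))" by (intro continuous_intros e(1))
  from head_integral_asymptotic[OF T k this h_lim]
  have "((\<lambda>t. (T - t) powr k + c * (F t * (T - t) powr k)) \<longlongrightarrow> 0 + c * (K / k)) (at_left T)"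
    unfolding F_def by (intro tendsto_intros tendsto_powr_diff_at_left k)
  moreover have "eventually (\<lambda>t. (T - t) powr k + c * (F t * (T - t) powr k)
      = (1 + c * F t) / (T - t) powr - k) (at_left T)"
    using eventually_at_left_pos[OF T] by eventually_elim (simp add: powr_minus field_simps)
  ultimately show ?thesis
    unfolding F_def using K k c by (intro exI[of _ "c * (K / k)"]) (auto intro: Lim_transform_eventually)
qed

lemma inverse_tendsto_0_of_powr_asymptotic:
  fixes \<phi> :: "real \<Rightarrow> real" and T k L :: real
  assumes T: "0 < T" and k: "0 < k" and L: "0 < L"
    and \<phi>: "((\<lambda>t. \<phi> t / (T - t) powr - k) \<longlongrightarrow> L) (at_left T)"
  shows "((\<lambda>t. 1 / \<phi> t) \<longlongrightarrow> 0) (at_left T)"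
proof -
  have "((\<lambda>t. (T - t) powr k / (\<phi> t / (T - t) powr - k)) \<longlongrightarrow> 0 / L) (at_left T)"
    using tendsto_divide[OF tendsto_powr_diff_at_left[OF k] \<phi>] L by simp
  moreover have "eventually (\<lambda>t. (T - t) powr k / (\<phi> t / (T - t) powr - k) = 1 / \<phi> t) (at_left T)"
    using eventually_at_left_pos[OF T] by eventually_elim (simp add: powr_minus field_simps)
  ultimately show ?thesis by (auto intro: Lim_transform_eventually)
qed

lemma eminf_inverse:
  fixes a v :: "'a::euclidean_space" and e :: "real \<Rightarrow> 'a" and c :: real
  defines "u \<equiv> \<lambda>t. 1 + c * integral {0..t} (\<lambda>s. exp (- (a \<bullet> e s)))"
  defines "p \<equiv> \<lambda>t. e t + ln (u t) *\<^sub>R coroot a"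
  assumes T: "0 < T" and k: "0 < k" and c: "0 < c" and a: "a \<noteq> 0" and v: "a \<bullet> v = 1 + k"
    and e: "continuous_on {0..<T} e" "log_asymptotic T v e"
  shows "continuous_on {0..<T} p" and "log_asymptotic T (v - k *\<^sub>R coroot a) p"
    and "(\<lambda>s. exp (- (a \<bullet> p s))) integrable_on {0..T}"
    and "integral {0..T} (\<lambda>s. exp (- (a \<bullet> p s))) = 1 / c"
    and "\<And>t. 0 \<le> t \<Longrightarrow> t < T \<Longrightarrow> eminf a T p t = e t"
proof -
  have h: "continuous_on {0..<T} (\<lambda>s. exp (- (a \<bullet> e s)))" by (intro continuous_intros e(1))
  have u: "0 < u t" if "0 \<le> t" "t < T" for t
    unfolding u_def using c that
    by (intro add_pos_nonneg mult_nonneg_nonneg integral_nonneg integrable_continuous_interval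
        continuous_on_subset[OF h]) auto
  show "continuous_on {0..<T} p"
    unfolding p_def u_def using u[unfolded u_def]
    by (intro continuous_intros e(1) continuous_on_indefinite_integral_Ico h) (auto simp: less_imp_neq[symmetric])
  obtain L where L: "0 < L" and u_lim: "((\<lambda>t. u t / (T - t) powr - k) \<longlongrightarrow> L) (at_left T)"
    using one_plus_integral_asymptotic[OF T k c v e] unfolding u_def by blast
  show "log_asymptotic T (v - k *\<^sub>R coroot a) p"
    using log_asymptotic_add_ln[OF e(2) T u_lim L, of "coroot a"] unfolding p_def by simp
  have G: "integral {0..t} (\<lambda>s. exp (- (a \<bullet> p s))) = (1 - 1 / u t) / c" if t: "0 \<le> t" "t < T" for t
  proof -
    have "integral {0..t} (\<lambda>s. exp (- (a \<bullet> p s))) = integral {0..t} (\<lambda>s. exp (- (a \<bullet> e s)) / (u s)\<^sup>2)"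
      using u t by (intro integral_cong) (auto simp: p_def exp_inner_add_ln_coroot[OF a])
    also have "\<dots> = (1 - 1 / u t) / c"
      using integral_div_square_primitive[OF h _ _ t, of c] u t c unfolding u_def by simp
    finally show ?thesis .
  qed
  show int: "(\<lambda>s. exp (- (a \<bullet> p s))) integrable_on {0..T}"
  proof (rule integrable_on_Icc_of_bounded_integrals[OF T, where M="1 / c"])
    fix t assume t: "0 \<le> t" "t < T"
    show "integral {0..t} (\<lambda>s. exp (- (a \<bullet> p s))) \<le> 1 / c"
      using u[OF t] c by (simp add: G[OF t] divide_right_mono)
  qed (intro continuous_intros \<open>continuous_on {0..<T} p\<close>, simp)
  have "((\<lambda>t. (1 - 1 / u t) / c) \<longlongrightarrow> (1 - 0) / c) (at_left T)"
    by (intro tendsto_intros inverse_tendsto_0_of_powr_asymptotic[OF T k L u_lim]) (use c in simp)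
  then have "((\<lambda>t. integral {0..t} (\<lambda>s. exp (- (a \<bullet> p s)))) \<longlongrightarrow> 1 / c) (at_left T)"
    using eventually_at_left_pos[OF T] by (auto intro: Lim_transform_eventually elim!: eventually_mono simp: G)
  then show total: "integral {0..T} (\<lambda>s. exp (- (a \<bullet> p s))) = 1 / c"
    using tendsto_unique[OF trivial_limit_at_left_real indefinite_integral_tendsto_at_left[OF int T]] by blast
  show "eminf a T p t = e t" if "0 \<le> t" "t < T" for t
    using u[OF that(1)] c unfolding eminf_def total G[OF that] by (simp add: p_def ln_div)
qed

lemma eminf_left_inverse:
  fixes a :: "'a::euclidean_space" and q e :: "real \<Rightarrow> 'a"
  defines "G \<equiv> \<lambda>t. integral {0..t} (\<lambda>s. exp (- (a \<bullet> q s)))"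
  assumes c: "0 < c" "c = 1 / integral {0..T} (\<lambda>s. exp (- (a \<bullet> q s)))" and a: "a \<noteq> 0"
    and q: "continuous_on {0..<T} q" "\<And>t. 0 \<le> t \<Longrightarrow> t < T \<Longrightarrow> G t < integral {0..T} (\<lambda>s. exp (- (a \<bullet> q s)))"
    and e: "\<And>t. 0 \<le> t \<Longrightarrow> t < T \<Longrightarrow> e t = eminf a T q t"
    and t: "0 \<le> t" "t < T"
  shows "q t = e t + ln (1 + c * integral {0..t} (\<lambda>s. exp (- (a \<bullet> e s)))) *\<^sub>R coroot a"
proof -
  define u where "u s = 1 + (- c) * G s" for s
  have u: "0 < u s" if "0 \<le> s" "s < T" for s
  proof -
    have "c * G s < c * integral {0..T} (\<lambda>s. exp (- (a \<bullet> q s)))"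
      using q(2)[OF that] c(1) by simp
    moreover have "c * integral {0..T} (\<lambda>s. exp (- (a \<bullet> q s))) = 1"
      using c by (metis divide_eq_0_iff less_irrefl nonzero_eq_divide_eq zero_neq_one)
    ultimately show ?thesis unfolding u_def by simp
  qed
  have e_eq: "e s = q s + ln (u s) *\<^sub>R coroot a" if "0 \<le> s" "s < T" for s
    using e[OF that] c unfolding eminf_def u_def G_def by simp
  have "integral {0..t} (\<lambda>s. exp (- (a \<bullet> e s))) = integral {0..t} (\<lambda>s. exp (- (a \<bullet> q s)) / (u s)\<^sup>2)"
    using u t by (intro integral_cong) (auto simp: e_eq exp_inner_add_ln_coroot[OF a])
  also have "\<dots> = (1 - 1 / u t) / - c"
    using integral_div_square_primitive[OF _ _ _ t, of "\<lambda>s. exp (- (a \<bullet> q s))" "- c"]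
      continuous_on_exp[OF continuous_on_minus[OF continuous_on_inner[OF continuous_on_const q(1)]]] u t c unfolding u_def G_def by simp
  finally have "1 + c * integral {0..t} (\<lambda>s. exp (- (a \<bullet> e s))) = 1 / u t"
    using c(1) by (simp add: field_simps)
  then show ?thesis using e_eq[OF t] u[OF t] by (simp add: ln_div)
qed

context
  fixes D :: "'a::euclidean_space set" and T :: real and w :: "'a \<Rightarrow> 'a" and a :: 'a
  assumes D: "simple_system D" and T: "0 < T" and w: "w \<in> weyl D" and a: "a \<in> D"
    and len: "wlen D w \<le> wlen D (w \<circ> refl a)"
begin

lemma low_path_direction_comp_refl:
  "rho_vee D - inv (w \<circ> refl a) (rho_vee D)
    = (rho_vee D - inv w (rho_vee D)) + (a \<bullet> inv w (rho_vee D)) *\<^sub>R coroot a"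
  using inv_weyl_comp_refl[OF w] by (simp add: refl_def algebra_simps)

lemma inner_low_path_direction: "a \<bullet> (rho_vee D - inv w (rho_vee D)) = 1 - a \<bullet> inv w (rho_vee D)"
  using inner_rho_vee_simple[OF D a] by (simp add: inner_diff_right)

lemma low_path_eminf:
  assumes p: "low_path D T w p"
  shows "(\<lambda>s. exp (- (a \<bullet> p s))) integrable_on {0..T}"
    and "0 < 1 / integral {0..T} (\<lambda>s. exp (- (a \<bullet> p s)))"
    and "\<And>t. 0 \<le> t \<Longrightarrow> t < T \<Longrightarrow> integral {0..t} (\<lambda>s. exp (- (a \<bullet> p s))) < integral {0..T} (\<lambda>s. exp (- (a \<bullet> p s)))"
    and "low_path D T (w \<circ> refl a) (eminf a T p)"
proof -
  have "continuous_on {0..<T} p" "p 0 = 0" "log_asymptotic T (rho_vee D - inv w (rho_vee D)) p"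
    using p unfolding low_path_iff by auto
  note eminf = eminf_log_asymptotic[OF T inner_inv_weyl_rho_vee_pos[OF D w a len]
      inner_low_path_direction this(1,3)]
  show "(\<lambda>s. exp (- (a \<bullet> p s))) integrable_on {0..T}"
    and less: "\<And>t. 0 \<le> t \<Longrightarrow> t < T \<Longrightarrow> integral {0..t} (\<lambda>s. exp (- (a \<bullet> p s))) < integral {0..T} (\<lambda>s. exp (- (a \<bullet> p s)))"
    using eminf(1,2) by auto
  show "0 < 1 / integral {0..T} (\<lambda>s. exp (- (a \<bullet> p s)))" using less[of 0] T by simp
  show "low_path D T (w \<circ> refl a) (eminf a T p)"
    unfolding low_path_iff low_path_direction_comp_refl using eminf(3,4) \<open>p 0 = 0\<close>
    by (simp add: eminf_def)
qed

lemma low_path_eminf_inverse: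
  fixes e :: "real \<Rightarrow> 'a" and c :: real
  defines "p \<equiv> \<lambda>t. e t + ln (1 + c * integral {0..t} (\<lambda>s. exp (- (a \<bullet> e s)))) *\<^sub>R coroot a"
  assumes e: "low_path D T (w \<circ> refl a) e" and c: "0 < c"
  shows "low_path D T w p"
    and "(\<lambda>s. exp (- (a \<bullet> p s))) integrable_on {0..T}"
    and "c = 1 / integral {0..T} (\<lambda>s. exp (- (a \<bullet> p s)))"
    and "\<And>t. 0 \<le> t \<Longrightarrow> t < T \<Longrightarrow> e t = eminf a T p t"
proof -
  have e': "continuous_on {0..<T} e" "e 0 = 0"
    "log_asymptotic T ((rho_vee D - inv w (rho_vee D)) + (a \<bullet> inv w (rho_vee D)) *\<^sub>R coroot a) e"
    using e unfolding low_path_iff low_path_direction_comp_refl by auto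
  have "a \<noteq> 0" using simple_system_nonzero[OF D] a by blast
  then have "a \<bullet> (rho_vee D - inv w (rho_vee D) + (a \<bullet> inv w (rho_vee D)) *\<^sub>R coroot a)
      = 1 + a \<bullet> inv w (rho_vee D)"
    using inner_low_path_direction by (simp add: inner_add_right inner_coroot_self)
  note inverse = eminf_inverse[OF T inner_inv_weyl_rho_vee_pos[OF D w a len] c \<open>a \<noteq> 0\<close> this
      e'(1,3), folded p_def]
  show "low_path D T w p"
    unfolding low_path_iff using inverse(1,2) \<open>e 0 = 0\<close> by (simp add: p_def)
  show "(\<lambda>s. exp (- (a \<bullet> p s))) integrable_on {0..T}"
    and "c = 1 / integral {0..T} (\<lambda>s. exp (- (a \<bullet> p s)))"
    and "\<And>t. 0 \<le> t \<Longrightarrow> t < T \<Longrightarrow> e t = eminf a T p t"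
    using inverse(3-5) c by (simp_all add: p_def)
qed


lemma low_path_eminf_unique:
  assumes q: "low_path D T w q" "c = 1 / integral {0..T} (\<lambda>s. exp (- (a \<bullet> q s)))"
    and c: "0 < c" and e: "\<And>t. 0 \<le> t \<Longrightarrow> t < T \<Longrightarrow> e t = eminf a T q t"
    and t: "0 \<le> t" "t < T"
  shows "q t = e t + ln (1 + c * integral {0..t} (\<lambda>s. exp (- (a \<bullet> e s)))) *\<^sub>R coroot a"
proof (rule eminf_left_inverse[OF c q(2) _ _ low_path_eminf(3)[OF q(1)] e t])
  show "a \<noteq> 0" using simple_system_nonzero[OF D] a by blast
  show "continuous_on {0..<T} q" using q(1) unfolding low_path_iff by blast
qed


lemma eminf_preimage_low_path:
  assumes e: "low_path D T (w \<circ> refl a) e" and c: "0 < c"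
  shows "\<exists>p. low_path D T w p \<and> (\<lambda>s. exp (- (a \<bullet> p s))) integrable_on {0..T} \<and>
    c = 1 / integral {0..T} (\<lambda>s. exp (- (a \<bullet> p s))) \<and> (\<forall>t\<in>{0..<T}. e t = eminf a T p t) \<and>
    (\<forall>t\<in>{0..<T}. p t = e t + ln (1 + c * integral {0..t} (\<lambda>s. exp (- (a \<bullet> e s)))) *\<^sub>R coroot a) \<and>
    (\<forall>q. low_path D T w q \<and> (\<lambda>s. exp (- (a \<bullet> q s))) integrable_on {0..T} \<and>
       c = 1 / integral {0..T} (\<lambda>s. exp (- (a \<bullet> q s))) \<and> (\<forall>t\<in>{0..<T}. e t = eminf a T q t)
       \<longrightarrow> (\<forall>t\<in>{0..<T}. q t = p t))"
proof -
  define p where "p t = e t + ln (1 + c * integral {0..t} (\<lambda>s. exp (- (a \<bullet> e s)))) *\<^sub>R coroot a" for t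
  note p = low_path_eminf_inverse[OF e c, folded p_def]
  show ?thesis
  proof (intro exI[of _ p] conjI allI impI ballI)
    show "low_path D T w p" "(\<lambda>s. exp (- (a \<bullet> p s))) integrable_on {0..T}"
      "c = 1 / integral {0..T} (\<lambda>s. exp (- (a \<bullet> p s)))"
      by (fact p)+
  next
    fix t assume "t \<in> {0..<T}"
    then show "e t = eminf a T p t" using p(4) by simp
    show "p t = e t + ln (1 + c * integral {0..t} (\<lambda>s. exp (- (a \<bullet> e s)))) *\<^sub>R coroot a"
      by (simp add: p_def)
  next
    fix q t
    assume "low_path D T w q \<and> (\<lambda>s. exp (- (a \<bullet> q s))) integrable_on {0..T} \<and>
      c = 1 / integral {0..T} (\<lambda>s. exp (- (a \<bullet> q s))) \<and> (\<forall>t\<in>{0..<T}. e t = eminf a T q t)"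
      and "t \<in> {0..<T}"
    then show "q t = p t"
      unfolding p_def by (intro low_path_eminf_unique[OF _ _ c]) auto
  qed
qed

end

theorem mainTheorem12:
  fixes D :: "'a::euclidean_space set" and T :: real and w :: "'a \<Rightarrow> 'a" and a :: 'a
  assumes D: "simple_system D"
    and T: "T > 0"
    and w: "w \<in> weyl D"
    and a: "a \<in> D"
    and len: "wlen D (w \<circ> refl a) = wlen D w + 1"
  shows
    "(\<forall>p. low_path D T w p \<longrightarrow>
        (\<lambda>s. exp (- (a \<bullet> p s))) integrable_on {0..T} \<and>
        1 / integral {0..T} (\<lambda>s. exp (- (a \<bullet> p s))) > 0 \<and>
        low_path D T (w \<circ> refl a) (eminf a T p))
   \<and>
    (\<forall>e c. low_path D T (w \<circ> refl a) e \<longrightarrow> c > 0 \<longrightarrow>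
        (\<exists>p. low_path D T w p \<and>
             (\<lambda>s. exp (- (a \<bullet> p s))) integrable_on {0..T} \<and>
             c = 1 / integral {0..T} (\<lambda>s. exp (- (a \<bullet> p s))) \<and>
             (\<forall>t\<in>{0..<T}. e t = eminf a T p t) \<and>
             (\<forall>t\<in>{0..<T}. p t = e t + ln (1 + c * integral {0..t} (\<lambda>s. exp (- (a \<bullet> e s)))) *\<^sub>R coroot a) \<and>
             (\<forall>q. low_path D T w q \<and>
                  (\<lambda>s. exp (- (a \<bullet> q s))) integrable_on {0..T} \<and>
                  c = 1 / integral {0..T} (\<lambda>s. exp (- (a \<bullet> q s))) \<and>
                  (\<forall>t\<in>{0..<T}. e t = eminf a T q t)
                  \<longrightarrow> (\<forall>t\<in>{0..<T}. q t = p t))))"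
proof -
  have "wlen D w \<le> wlen D (w \<circ> refl a)" using len by simp
  then show ?thesis
    using low_path_eminf(1,2,4)[OF D T w a] eminf_preimage_low_path[OF D T w a] by blast
qed

end
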